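(* For positive integers $p,q$, the transition functions satisfy: (1) $\tau^p_q(n+p)=\tau^p_q(n)+q$ for each $n\in\mathbb{N}$; (2) $\tau^p_q$ is order-preserving; (3) $\tau^q_p\circ\tau^p_q\le\mathrm{id}_{\mathbb{N}}$ (pointwise); (4) $\tau^q_p\circ\tau^p_q=\mathrm{id}_{\mathbb{N}}$ if $p\le q$; (5) $(\tau^p_q)^{-1}(0)=\{0\}$ if either $p=q=1$ or $p,q\ge 2$.
   Context: $\mathbb{N}=\{0,1,2,\dots\}$. For positive integers $p,q$, the transition function $\tau^p_q:\mathbb{N}\to\mathbb{N}$ is defined by $\tau^p_q(mp+n)=mq+\min\{n,q-1\}$ for $m\in\mathbb{N}$ and $0\le n<p$. *)

theory Defs
  imports Main
begin

definition tau :: "nat \<Rightarrow> nat \<Rightarrow> nat \<Rightarrow> nat" where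
  "tau p q x = (x div p) * q + min (x mod p) (q - 1)"

end

theory Submission
  imports Defs
begin

text \<open>The function tau p q sends the p-block starting at m p into the q-block starting at
  m q, truncating the offset at q - 1; the round trip tau q p \<circ> tau p q therefore only truncates
  the offset at min p q - 1.\<close>

lemma tau_mult_add:
  assumes "r < p"
  shows "tau p q (m * p + r) = m * q + min r (q - 1)"
  using assms by (simp add: tau_def)

lemma tau_add_period:
  assumes "p > 0"
  shows "tau p q (n + p) = tau p q n + q"
  using assms by (simp add: tau_def div_add_self2 algebra_simps)

lemma tau_mono:
  assumes "p > 0" "q > 0" "x \<le> y"
  shows "tau p q x \<le> tau p q y"
proof (cases "x div p = y div p")
  case True
  then have "x mod p \<le> y mod p"
    using assms by (metis add_le_cancel_left div_mult_mod_eq)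
  with True show ?thesis by (simp add: tau_def)
next
  case False
  then have "x div p < y div p"
    using assms(3) div_le_mono le_neq_implies_less by blast
  have "tau p q x \<le> x div p * q + (q - 1)" by (simp add: tau_def)
  also have "\<dots> < (x div p + 1) * q" using assms by simp
  also have "\<dots> \<le> y div p * q" using \<open>x div p < y div p\<close> by (intro mult_right_mono) auto
  also have "\<dots> \<le> tau p q y" by (simp add: tau_def)
  finally show ?thesis by simp
qed

lemma mono_tau:
  assumes "p > 0" "q > 0"
  shows "mono (tau p q)"
  using assms by (auto intro: monoI tau_mono)

lemma tau_tau:
  assumes "p > 0" "q > 0"
  shows "tau q p (tau p q n) = n div p * p + min (n mod p) (min p q - 1)"
proof -
  have "min (n mod p) (q - 1) < q" using assms by simp
  then have "tau q p (tau p q n) = n div p * p + min (min (n mod p) (q - 1)) (p - 1)"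
    unfolding tau_def[of p q n] by (rule tau_mult_add)
  also have "min (min (n mod p) (q - 1)) (p - 1) = min (n mod p) (min p q - 1)"
    by linarith
  finally show ?thesis .
qed

lemma tau_tau_le:
  assumes "p > 0" "q > 0"
  shows "tau q p (tau p q n) \<le> n"
proof -
  have "tau q p (tau p q n) = n div p * p + min (n mod p) (min p q - 1)"
    using assms by (rule tau_tau)
  also have "\<dots> \<le> n div p * p + n mod p" by (rule add_left_mono) simp
  also have "\<dots> = n" by simp
  finally show ?thesis .
qed

lemma tau_tau_id:
  assumes "p > 0" "p \<le> q"
  shows "tau q p \<circ> tau p q = id"
proof
  fix n
  have "n mod p < p" using assms by simp
  then have "min (n mod p) (min p q - 1) = n mod p" using \<open>p \<le> q\<close> by simp
  then show "(tau q p \<circ> tau p q) n = id n" using assms by (simp add: tau_tau)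
qed

lemma tau_eq_0_iff:
  assumes "p > 0" "q > 0"
  shows "tau p q n = 0 \<longleftrightarrow> n = 0 \<or> (n < p \<and> q = 1)"
  using assms by (auto simp: tau_def div_eq_0_iff)

theorem proposition2p3:
  fixes p q :: nat
  assumes "p > 0" and "q > 0"
  shows "(\<forall>n. tau p q (n + p) = tau p q n + q)
    \<and> mono (tau p q)
    \<and> (\<forall>n. tau q p (tau p q n) \<le> n)
    \<and> (p \<le> q \<longrightarrow> tau q p \<circ> tau p q = id)
    \<and> ((p = 1 \<and> q = 1) \<or> (p \<ge> 2 \<and> q \<ge> 2) \<longrightarrow> tau p q -` {0} = {0})"
proof (intro conjI allI impI)
  assume "(p = 1 \<and> q = 1) \<or> (p \<ge> 2 \<and> q \<ge> 2)"
  then have "tau p q n = 0 \<longleftrightarrow> n = 0" for n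
    using assms by (auto simp: tau_eq_0_iff)
  then show "tau p q -` {0} = {0}" by auto
qed (use assms in \<open>simp_all add: tau_add_period mono_tau tau_tau_le tau_tau_id\<close>)

end
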